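(* Let $\mathcal{C}=\mathsf{CSS}(A,B)$ be a qudit CSS code on $n$ qudits with distance at least $3$, and $H_A$ a parity-check matrix for $A$. Then any permutation automorphism $\tau$ of $\mathcal{C}$ such that $H_AP_\tau=H_A$, where $P_\tau$ is the permutation matrix of $\tau$, acts as a logical identity on $\mathcal{C}$.
   Context: Let $q$ be a prime power. For classical codes $A,B\subseteq\mathbb{F}_q^n$ with full-row-rank parity-check matrices $H_A,H_B$ satisfying $H_AH_B^T=0$, $\mathsf{CSS}(A,B)$ is the qudit stabilizer code with $X$-type stabilizers $X^v$ ($v$ in the row space of $H_A$) and $Z$-type stabilizers $Z^w$ ($w$ in the row space of $H_B$). A permutation $\tau\in S_n$ is a permutation automorphism of a classical code with parity-check matrix $H$ (of $r$ rows) if $UH=HP_\tau$ for some $U\in\mathrm{GL}_r(\mathbb{F}_q)$; it is a permutation automorphism of $\mathsf{CSS}(A,B)$ if it is one for both $A$ and $B$. Permuting physical qudits by $\tau$ is then an operator on the code; a logical identity acts as the identity on the codespace. *)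

theory Defs
  imports "HOL-Analysis.Analysis"
begin

text \<open>Finite field F_q = type 'a :: {field, finite}; q = CARD('a), p = CHAR('a).
  Qudits are indexed by the finite type 'n (n = CARD('n)).
  States of n qudits: functions from the computational basis 'a^'n to complex.\<close>

type_synonym ('a, 'n) qstate = "'a ^ 'n \<Rightarrow> complex"

definition field_deg :: "'a::{field,finite} itself \<Rightarrow> nat" where
  "field_deg T = (THE m. CARD('a) = CHAR('a) ^ m)"

definition field_trace :: "'a::{field,finite} \<Rightarrow> 'a" where
  "field_trace x = (\<Sum>i < field_deg TYPE('a). x ^ (CHAR('a) ^ i))"

text \<open>Canonical additive character: omega^(tr x), omega = exp(2 pi i / p).\<close>
definition add_char :: "'a::{field,finite} \<Rightarrow> complex" where
  "add_char x = cis (2 * pi * real (THE k. k < CHAR('a) \<and> of_nat k = field_trace x) / real CHAR('a))"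

definition dotp :: "'a::{field,finite} ^ 'n \<Rightarrow> 'a ^ 'n \<Rightarrow> 'a" where
  "dotp u v = (\<Sum>i\<in>UNIV. u $ i * v $ i)"

text \<open>Generalized Pauli operators: X^v |x> = |x + v>,  Z^w |x> = omega^(tr(w.x)) |x>.\<close>
definition Xop :: "'a::{field,finite} ^ 'n \<Rightarrow> ('a, 'n) qstate \<Rightarrow> ('a, 'n) qstate" where
  "Xop v \<psi> = (\<lambda>y. \<psi> (y - v))"

definition Zop :: "'a::{field,finite} ^ 'n \<Rightarrow> ('a, 'n) qstate \<Rightarrow> ('a, 'n) qstate" where
  "Zop w \<psi> = (\<lambda>x. add_char (dotp w x) * \<psi> x)"

definition pauli :: "'a::{field,finite} ^ 'n \<Rightarrow> 'a ^ 'n \<Rightarrow> ('a, 'n) qstate \<Rightarrow> ('a, 'n) qstate" where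
  "pauli a b = Xop a \<circ> Zop b"

definition rowspace :: "'a::{field,finite} ^ 'n ^ 'r \<Rightarrow> ('a ^ 'n) set" where
  "rowspace H = {c v* H | c. True}"

definition full_row_rank :: "'a::{field,finite} ^ 'n ^ 'r \<Rightarrow> bool" where
  "full_row_rank H \<longleftrightarrow> (\<forall>c. c v* H = 0 \<longrightarrow> c = 0)"

definition css_valid :: "'a::{field,finite} ^ 'n ^ 'ra \<Rightarrow> 'a ^ 'n ^ 'rb \<Rightarrow> bool" where
  "css_valid HA HB \<longleftrightarrow> full_row_rank HA \<and> full_row_rank HB \<and> HA ** transpose HB = 0"

definition css_codespace :: "'a::{field,finite} ^ 'n ^ 'ra \<Rightarrow> 'a ^ 'n ^ 'rb \<Rightarrow> ('a, 'n) qstate set" where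
  "css_codespace HA HB = {\<psi>. (\<forall>v \<in> rowspace HA. Xop v \<psi> = \<psi>) \<and> (\<forall>w \<in> rowspace HB. Zop w \<psi> = \<psi>)}"

definition sympl_weight :: "'a::{field,finite} ^ 'n \<Rightarrow> 'a ^ 'n \<Rightarrow> nat" where
  "sympl_weight a b = card {i. a $ i \<noteq> 0 \<or> b $ i \<noteq> 0}"

definition css_normalizes :: "'a::{field,finite} ^ 'n ^ 'ra \<Rightarrow> 'a ^ 'n ^ 'rb \<Rightarrow> 'a ^ 'n \<Rightarrow> 'a ^ 'n \<Rightarrow> bool" where
  "css_normalizes HA HB a b \<longleftrightarrow>
     (\<forall>v \<in> rowspace HA. Xop v \<circ> pauli a b = pauli a b \<circ> Xop v) \<and>
     (\<forall>w \<in> rowspace HB. Zop w \<circ> pauli a b = pauli a b \<circ> Zop w)"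

definition css_in_stabilizer :: "'a::{field,finite} ^ 'n ^ 'ra \<Rightarrow> 'a ^ 'n ^ 'rb \<Rightarrow> 'a ^ 'n \<Rightarrow> 'a ^ 'n \<Rightarrow> bool" where
  "css_in_stabilizer HA HB a b \<longleftrightarrow> a \<in> rowspace HA \<and> b \<in> rowspace HB"

definition css_distance_ge :: "'a::{field,finite} ^ 'n ^ 'ra \<Rightarrow> 'a ^ 'n ^ 'rb \<Rightarrow> nat \<Rightarrow> bool" where
  "css_distance_ge HA HB d \<longleftrightarrow>
     (\<forall>a b. css_normalizes HA HB a b \<and> sympl_weight a b < d \<longrightarrow> css_in_stabilizer HA HB a b)"

definition perm_matrix :: "('n::finite \<Rightarrow> 'n) \<Rightarrow> 'a::{field,finite} ^ 'n ^ 'n" where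
  "perm_matrix \<tau> = (\<chi> i j. if \<tau> i = j then 1 else 0)"

definition perm_aut_classical :: "('n::finite \<Rightarrow> 'n) \<Rightarrow> 'a::{field,finite} ^ 'n ^ 'r \<Rightarrow> bool" where
  "perm_aut_classical \<tau> H \<longleftrightarrow> \<tau> permutes UNIV \<and>
     (\<exists>U :: 'a ^ 'r ^ 'r. invertible U \<and> U ** H = H ** perm_matrix \<tau>)"

definition perm_aut_css :: "('n::finite \<Rightarrow> 'n) \<Rightarrow> 'a::{field,finite} ^ 'n ^ 'ra \<Rightarrow> 'a ^ 'n ^ 'rb \<Rightarrow> bool" where
  "perm_aut_css \<tau> HA HB \<longleftrightarrow> perm_aut_classical \<tau> HA \<and> perm_aut_classical \<tau> HB"

text \<open>Physical qudit permutation: the content of qudit i is moved to position tau i.\<close>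
definition qudit_perm_op :: "('n::finite \<Rightarrow> 'n) \<Rightarrow> ('a, 'n) qstate \<Rightarrow> ('a, 'n) qstate" where
  "qudit_perm_op \<tau> \<psi> = (\<lambda>y. \<psi> (\<chi> i. y $ (\<tau> i)))"

definition logical_identity :: "(('a, 'n) qstate \<Rightarrow> ('a, 'n) qstate) \<Rightarrow> ('a, 'n) qstate set \<Rightarrow> bool" where
  "logical_identity U C \<longleftrightarrow> (\<forall>\<psi> \<in> C. U \<psi> = \<psi>)"

end

theory Submission
  imports Defs "HOL-Algebra.Sylow" "HOL-Algebra.Multiplicative_Group"
    "HOL-Computational_Algebra.Polynomial" "HOL-Number_Theory.Cong" "HOL-Library.Real_Mod"
begin

text \<open>
  \<open>H\<^sub>A P\<^sub>\<tau> = H\<^sub>A\<close> says that every X-stabilizer vector \<open>v\<close> satisfies \<open>v\<^sub>\<tau>\<^sub>i = v\<^sub>i\<close>.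
  Hence for every qudit \<open>i\<close> and scalar \<open>c\<close> the weight-two Z-type Pauli \<open>Z\<^sup>b\<close> with
  \<open>b = c(e\<^sub>i - e\<^sub>\<tau>\<^sub>i)\<close> commutes with all stabilizers, and distance at least 3 forces it
  into the stabilizer group. On a basis state \<open>y\<close> in the support of a codeword, \<open>Z\<^sup>b\<close> acts
  by the character value \<open>\<chi>(c(y\<^sub>i - y\<^sub>\<tau>\<^sub>i))\<close>; since the additive character \<open>\<chi>\<close> is
  nontrivial (the trace form is not identically zero and takes values in the prime field),
  this forces \<open>y\<^sub>\<tau>\<^sub>i = y\<^sub>i\<close>. Codewords are thus supported on \<open>\<tau>\<close>-invariant basis states,
  which the qudit permutation fixes.
\<close>

lemma eq_prime_power_multiplicity:
  fixes n p :: nat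
  assumes "n > 0" and "prime p" and "\<And>q. prime q \<Longrightarrow> q dvd n \<Longrightarrow> q = p"
  shows "n = p ^ multiplicity p n"
proof -
  have "prime_factorization n = replicate_mset (multiplicity p n) p"
  proof (rule multiset_eqI)
    fix q
    show "count (prime_factorization n) q = count (replicate_mset (multiplicity p n) p) q"
      using assms by (cases "prime q \<and> q dvd n")
        (auto simp: count_prime_factorization not_dvd_imp_multiplicity_0)
  qed
  then show ?thesis
    using prod_mset_prime_factorization_nat[of n] assms(1) by simp
qed

definition additive_group :: "'a::ab_group_add monoid" where
  "additive_group = \<lparr>carrier = UNIV, monoid.mult = (+), one = 0\<rparr>"

lemma group_additive_group: "group additive_group"
proof (rule groupI)
  fix x :: 'a assume "x \<in> carrier additive_group"
  show "\<exists>y\<in>carrier additive_group. y \<otimes>\<^bsub>additive_group\<^esub> x = \<one>\<^bsub>additive_group\<^esub>"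
    by (intro bexI[of _ "-x"]) (auto simp: additive_group_def)
qed (auto simp: additive_group_def add_ac)

lemma additive_group_simps [simp]:
  "carrier additive_group = UNIV" "\<one>\<^bsub>additive_group\<^esub> = 0"
  by (simp_all add: additive_group_def)

lemma additive_group_pow [simp]:
  "x [^]\<^bsub>additive_group\<^esub> n = of_nat n * (x :: 'a::ring_1)"
  by (induction n) (auto simp: additive_group_def distrib_right)

definition multiplicative_group :: "'a::field monoid" where
  "multiplicative_group = \<lparr>carrier = UNIV - {0}, monoid.mult = (*), one = 1\<rparr>"

lemma group_multiplicative_group: "group multiplicative_group"
proof (rule groupI)
  fix x :: 'a assume "x \<in> carrier multiplicative_group"
  then show "\<exists>y\<in>carrier multiplicative_group. y \<otimes>\<^bsub>multiplicative_group\<^esub> x = \<one>\<^bsub>multiplicative_group\<^esub>"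
    by (intro bexI[of _ "inverse x"]) (auto simp: multiplicative_group_def)
qed (auto simp: multiplicative_group_def mult_ac)

lemma multiplicative_group_simps [simp]:
  "carrier multiplicative_group = UNIV - {0}" "\<one>\<^bsub>multiplicative_group\<^esub> = 1"
  by (simp_all add: multiplicative_group_def)

lemma multiplicative_group_pow [simp]:
  "x [^]\<^bsub>multiplicative_group\<^esub> n = (x :: 'a::field) ^ n"
  by (induction n) (auto simp: multiplicative_group_def mult_ac)

lemma prime_CHAR_finite_field: "prime CHAR('a::{field,finite})"
  by (rule prime_CHAR_semidom) (rule finite_imp_CHAR_pos, simp)

lemma prime_dvd_card_imp_eq_CHAR:
  assumes "prime r" and "r dvd CARD('a::{field,finite})"
  shows "r = CHAR('a)"
proof -
  obtain k where "CARD('a) = r ^ 1 * k"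
    using assms(2) by auto
  \<comment> \<open>Cauchy's theorem, as the case \<open>r\<^sup>1\<close> of Sylow's theorem\<close>
  then obtain H where H: "subgroup H (additive_group :: 'a monoid)" "card H = r"
    using sylow_thm[OF assms(1) group_additive_group[where 'a='a], of 1 k]
    by (auto simp: order_def additive_group_def)
  interpret H: group "additive_group\<lparr>carrier := H\<rparr>"
    using group.subgroup_imp_group[OF group_additive_group H(1)] .
  have "\<not> H \<subseteq> {0}"
    using card_mono[of "{0::'a}" H] H(2) prime_gt_1_nat[OF assms(1)] by auto
  then obtain x :: 'a where x: "x \<in> H" "x \<noteq> 0"
    by blast
  have "of_nat r * x = 0"
    using H.pow_order_eq_1[of x] x(1) H(2)
    by (simp add: order_def
        flip: monoid.nat_pow_consistent[OF group.is_monoid[OF group_additive_group]])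
  then have "CHAR('a) dvd r"
    using x(2) by (simp add: of_nat_eq_0_iff_char_dvd)
  then show ?thesis
    using primes_dvd_imp_eq[OF prime_CHAR_finite_field[where 'a='a] assms(1)] by simp
qed

lemma CARD_eq_CHAR_power: "CARD('a::{field,finite}) = CHAR('a) ^ field_deg TYPE('a)"
proof -
  let ?m = "multiplicity CHAR('a) CARD('a)"
  have card: "CARD('a) = CHAR('a) ^ ?m"
    by (rule eq_prime_power_multiplicity)
      (auto intro: prime_dvd_card_imp_eq_CHAR prime_CHAR_finite_field)
  have "field_deg TYPE('a) = ?m"
    unfolding field_deg_def
  proof (rule the_equality)
    fix m assume "CARD('a) = CHAR('a) ^ m"
    then show "m = ?m"
      using card prime_gt_1_nat[OF prime_CHAR_finite_field[where 'a='a]] by simp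
  qed (fact card)
  with card show ?thesis by simp
qed

lemma field_deg_pos: "field_deg TYPE('a::{field,finite}) > 0"
proof (rule Nat.gr0I)
  assume "field_deg TYPE('a) = 0"
  then have "CARD('a) = 1"
    using CARD_eq_CHAR_power[where 'a='a] by simp
  moreover have "card {0::'a, 1} \<le> CARD('a)"
    by (rule card_mono) auto
  ultimately show False
    by simp
qed

lemma power_CARD_eq_self: "(x::'a::{field,finite}) ^ CARD('a) = x"
proof (cases "x = 0")
  case False
  interpret group "multiplicative_group :: 'a monoid"
    by (rule group_multiplicative_group)
  have "order (multiplicative_group :: 'a monoid) = CARD('a) - 1"
    by (simp add: order_def card_Diff_singleton)
  then have "x ^ (CARD('a) - 1) = 1"
    using pow_order_eq_1[of x] False by simp
  then show ?thesis
    by (metis power_minus_mult finite_UNIV_card_ge_0 finite mult_1)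
qed simp

lemma field_trace_power_CHAR: "field_trace (x::'a::{field,finite}) ^ CHAR('a) = field_trace x"
proof -
  let ?p = "CHAR('a)"
  obtain k where k: "field_deg TYPE('a) = Suc k"
    using field_deg_pos[where 'a='a] gr0_implies_Suc by blast
  have "field_trace x ^ ?p = (\<Sum>i<Suc k. (x ^ ?p ^ i) ^ ?p)"
    unfolding field_trace_def k by (rule freshmans_dream_sum[OF prime_CHAR_finite_field refl])
  also have "\<dots> = (\<Sum>i<k. x ^ ?p ^ Suc i) + x ^ ?p ^ Suc k"
    by (simp add: power_mult[symmetric] mult.commute)
  also have "x ^ ?p ^ Suc k = x"
    using power_CARD_eq_self[of x] CARD_eq_CHAR_power[where 'a='a] by (simp add: k)
  also have "(\<Sum>i<k. x ^ ?p ^ Suc i) + x = (\<Sum>i<Suc k. x ^ ?p ^ i)"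
    by (simp only: sum.lessThan_Suc_shift power_0 power_one_right add.commute)
  finally show ?thesis
    by (simp add: field_trace_def k)
qed

lemma of_nat_power_CHAR: "(of_nat k :: 'a::{field,finite}) ^ CHAR('a) = of_nat k"
proof (induction k)
  case (Suc k)
  then show ?case
    using freshmans_dream[OF prime_CHAR_finite_field refl, of "of_nat k :: 'a" 1]
    by (simp add: add.commute)
qed (simp add: prime_gt_0_nat[OF prime_CHAR_finite_field])

lemma power_CHAR_eq_self_imp_of_nat:
  assumes "(y::'a::{field,finite}) ^ CHAR('a) = y"
  shows "\<exists>k<CHAR('a). y = of_nat k"
proof -
  let ?p = "CHAR('a)"
  define P :: "'a poly" where "P = Polynomial.monom 1 ?p - [:0, 1:]"
  have p_gt_1: "?p > 1"
    using prime_gt_1_nat[OF prime_CHAR_finite_field] .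
  have poly_P: "poly P z = z ^ ?p - z" for z
    by (simp add: P_def poly_monom)
  have "Polynomial.coeff P ?p = 1"
    using p_gt_1 by (simp add: P_def coeff_pCons split: nat.split)
  then have P_nonzero: "P \<noteq> 0"
    by auto
  have "degree P \<le> ?p"
    unfolding P_def using p_gt_1
    by (intro order.trans[OF degree_diff_le_max]) (auto simp: degree_monom_le)
  then have "card {z. poly P z = 0} \<le> ?p"
    using card_poly_roots_bound[OF P_nonzero] by simp
  moreover define S where "S = (of_nat ` {..<?p} :: 'a set)"
  moreover have "card S = ?p"
    unfolding S_def
    by (subst card_image) (auto intro!: inj_onI simp: of_nat_eq_iff_cong_CHAR cong_def)
  moreover have "S \<subseteq> {z. poly P z = 0}"
    by (auto simp: S_def poly_P of_nat_power_CHAR)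
  ultimately have "S = {z. poly P z = 0}"
    by (intro card_seteq) auto
  moreover have "poly P y = 0"
    using assms by (simp add: poly_P)
  ultimately show ?thesis
    by (auto simp: S_def)
qed

lemma field_trace_nonzero: "\<exists>s::'a::{field,finite}. field_trace s \<noteq> 0"
proof (rule ccontr)
  assume "\<nexists>s::'a. field_trace s \<noteq> 0"
  then have trace_zero: "field_trace s = 0" for s :: 'a
    by blast
  let ?p = "CHAR('a)"
  have p_gt_1: "?p > 1"
    using prime_gt_1_nat[OF prime_CHAR_finite_field] .
  obtain k where k: "field_deg TYPE('a) = Suc k"
    using field_deg_pos[where 'a='a] gr0_implies_Suc by blast
  define T :: "'a poly" where "T = (\<Sum>i<Suc k. Polynomial.monom 1 (?p ^ i))"
  have poly_T: "poly T z = field_trace z" for z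
    by (simp add: T_def poly_sum poly_monom field_trace_def k)
  have "Polynomial.coeff T (?p ^ k) = (\<Sum>i<Suc k. if i = k then 1 else 0)"
    unfolding T_def coeff_sum using p_gt_1 by (intro sum.cong refl) simp
  then have T_nonzero: "T \<noteq> 0"
    by auto
  have "degree T \<le> ?p ^ k"
    unfolding T_def
  proof (rule degree_sum_le)
    fix i assume "i \<in> {..<Suc k}"
    then have "?p ^ i \<le> ?p ^ k"
      using p_gt_1 by (simp add: power_increasing)
    then show "degree (Polynomial.monom (1::'a) (?p ^ i)) \<le> ?p ^ k"
      using degree_monom_le order.trans by blast
  qed simp
  moreover have "CARD('a) \<le> degree T"
    using card_poly_roots_bound[OF T_nonzero] by (simp add: poly_T trace_zero)
  moreover have "?p ^ k < CARD('a)"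
    using CARD_eq_CHAR_power[where 'a='a] k p_gt_1 by simp
  ultimately show False
    by linarith
qed

lemma add_char_eq_cis:
  assumes "k < CHAR('a)" and "field_trace (s::'a::{field,finite}) = of_nat k"
  shows "add_char s = cis (2 * pi * real k / real CHAR('a))"
proof -
  have "(THE k'. k' < CHAR('a) \<and> of_nat k' = field_trace s) = k"
    using assms by (intro the_equality) (auto simp: of_nat_eq_iff_cong_CHAR cong_def)
  then show ?thesis
    by (simp add: add_char_def)
qed

lemma add_char_nontrivial: "\<exists>s::'a::{field,finite}. add_char s \<noteq> 1"
proof -
  let ?p = "CHAR('a)"
  obtain s :: 'a where s: "field_trace s \<noteq> 0"
    using field_trace_nonzero by blast
  obtain k where k: "k < ?p" "field_trace s = of_nat k"
    using power_CHAR_eq_self_imp_of_nat[OF field_trace_power_CHAR] by blast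
  have "k \<noteq> 0"
    using k(2) s by (metis of_nat_0)
  then have "0 < real k / real ?p" "real k / real ?p < 1"
    using k(1) by (auto simp: field_simps)
  then have not_int: "real k / real ?p \<notin> \<int>"
    by (auto elim!: Ints_cases)
  have "cis (2 * pi * (real k / real ?p)) \<noteq> 1"
  proof
    assume "cis (2 * pi * (real k / real ?p)) = 1"
    then obtain n where "(2 * pi) * (real k / real ?p) = (2 * pi) * of_int n"
      by (auto simp: cis_eq_1_iff mult.commute)
    then have "real k / real ?p = of_int n"
      by (subst (asm) mult_cancel_left) simp
    with not_int show False
      by auto
  qed
  then have "add_char s \<noteq> 1"
    using add_char_eq_cis[OF k] by simp
  then show ?thesis
    by blast
qed

lemma dotp_diff_left: "dotp (a - b) z = dotp a z - dotp b z"
  by (simp add: dotp_def left_diff_distrib sum_subtractf)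

lemma dotp_diff_right: "dotp b (x - y) = dotp b x - dotp b y"
  by (simp add: dotp_def right_diff_distrib sum_subtractf)

lemma dotp_axis_left: "dotp (axis i c) z = c * z $ i"
  by (simp add: dotp_def axis_def if_distrib[of "\<lambda>u. u * _"] cong: if_cong)

lemma Xop_zero [simp]: "Xop 0 = id"
  by (simp add: Xop_def fun_eq_iff)

lemma Xop_Zop_commute:
  assumes "dotp b v = 0"
  shows "Xop v \<circ> Zop b = Zop b \<circ> Xop v"
  using assms by (simp add: fun_eq_iff Xop_def Zop_def dotp_diff_right)

lemma Zop_Zop_commute: "Zop w \<circ> Zop b = Zop b \<circ> Zop w"
  by (simp add: fun_eq_iff Zop_def)

lemma css_distance_ge_imp_Z_type_in_rowspace:
  assumes "css_distance_ge HA HB d"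
    and "\<forall>v\<in>rowspace HA. dotp b v = 0"
    and "card {i. b $ i \<noteq> 0} < d"
  shows "b \<in> rowspace HB"
proof -
  have "css_normalizes HA HB 0 b"
    using assms(2) by (simp add: css_normalizes_def pauli_def Xop_Zop_commute Zop_Zop_commute)
  moreover have "sympl_weight 0 b < d"
    using assms(3) by (simp add: sympl_weight_def)
  ultimately show ?thesis
    using assms(1) by (simp add: css_distance_ge_def css_in_stabilizer_def)
qed

lemma css_codespace_add_char_dotp_eq_1:
  assumes "\<psi> \<in> css_codespace HA HB" and "w \<in> rowspace HB" and "\<psi> y \<noteq> 0"
  shows "add_char (dotp w y) = 1"
proof -
  have "Zop w \<psi> y = \<psi> y"
    using assms(1,2) by (simp add: css_codespace_def)
  then show ?thesis
    using assms(3) by (simp add: Zop_def)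
qed

lemma css_codespace_support_coordinates_eq:
  fixes HA :: "'a::{field,finite} ^ 'n::finite ^ 'ra"
  assumes "css_distance_ge HA HB 3"
    and "\<forall>v\<in>rowspace HA. v $ i = v $ j"
    and "\<psi> \<in> css_codespace HA HB" and "\<psi> y \<noteq> 0"
  shows "y $ i = y $ j"
proof (rule ccontr)
  assume y_ne: "y $ i \<noteq> y $ j"
  obtain s :: 'a where s: "add_char s \<noteq> 1"
    using add_char_nontrivial by blast
  define c where "c = s / (y $ i - y $ j)"
  define b where "b = axis i c - axis j c"
  have dotp_b: "dotp b z = c * (z $ i - z $ j)" for z
    by (simp add: b_def dotp_diff_left dotp_axis_left right_diff_distrib)
  have "{k. b $ k \<noteq> 0} \<subseteq> {i, j}"
    by (auto simp: b_def axis_def)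
  then have "card {k. b $ k \<noteq> 0} \<le> card {i, j}"
    by (rule card_mono[rotated]) simp
  also have "\<dots> < 3"
    by (simp add: card_insert_if)
  finally have "b \<in> rowspace HB"
    using assms(1,2) by (intro css_distance_ge_imp_Z_type_in_rowspace) (auto simp: dotp_b)
  then have "add_char (dotp b y) = 1"
    using assms(3,4) css_codespace_add_char_dotp_eq_1 by blast
  moreover have "dotp b y = s"
    using y_ne by (simp add: dotp_b c_def)
  ultimately show False
    using s by simp
qed

lemma vector_perm_matrix_mult_apply:
  assumes "inj \<tau>"
  shows "(x v* perm_matrix \<tau>) $ \<tau> i = x $ i"
  using assms
  by (simp add: vector_matrix_mult_def perm_matrix_def inj_eq if_distrib[of "(*) _"] cong: if_cong)

lemma rowspace_perm_invariant:
  assumes "inj \<tau>" and "H ** perm_matrix \<tau> = H" and "v \<in> rowspace H"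
  shows "v $ \<tau> i = v $ i"
proof -
  obtain c where "v = c v* H"
    using assms(3) by (auto simp: rowspace_def)
  then have "v = v v* perm_matrix \<tau>"
    using assms(2) by (simp add: vector_matrix_mul_assoc)
  then show ?thesis
    using vector_perm_matrix_mult_apply[OF assms(1)] by metis
qed

lemma qudit_perm_op_eq_self:
  fixes \<psi> :: "('a::{field,finite}, 'n::finite) qstate"
  assumes "\<tau> permutes UNIV"
    and "\<And>y i. \<psi> y \<noteq> 0 \<Longrightarrow> y $ \<tau> i = y $ i"
  shows "qudit_perm_op \<tau> \<psi> = \<psi>"
proof
  fix y :: "'a ^ 'n"
  define z where "z = (\<chi> i. y $ \<tau> i)"
  have "z = y \<longleftrightarrow> (\<forall>i. y $ \<tau> i = y $ i)"
    by (simp add: z_def vec_eq_iff)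
  moreover have "(\<forall>i. z $ \<tau> i = z $ i) \<longleftrightarrow> (\<forall>i. y $ \<tau> (\<tau> i) = y $ \<tau> i)"
    by (simp add: z_def)
  moreover have "\<dots> \<longleftrightarrow> (\<forall>i. y $ \<tau> i = y $ i)"
    using permutes_surj[OF assms(1)] by (metis surjD)
  ultimately have "\<psi> z = \<psi> y"
    using assms(2) by metis
  then show "qudit_perm_op \<tau> \<psi> y = \<psi> y"
    by (simp add: qudit_perm_op_def z_def)
qed

theorem corollary3:
  fixes HA :: "'a::{field,finite} ^ 'n::finite ^ 'ra::finite"
    and HB :: "'a ^ 'n ^ 'rb::finite"
    and \<tau> :: "'n \<Rightarrow> 'n"
  assumes "css_valid HA HB"
    and "css_distance_ge HA HB 3"
    and "perm_aut_css \<tau> HA HB"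
    and "HA ** perm_matrix \<tau> = HA"
  shows "logical_identity (qudit_perm_op \<tau>) (css_codespace HA HB)"
proof -
  have perm: "\<tau> permutes UNIV"
    using assms(3) by (simp add: perm_aut_css_def perm_aut_classical_def)
  have "\<forall>v\<in>rowspace HA. v $ \<tau> i = v $ i" for i
    using rowspace_perm_invariant[OF permutes_inj[OF perm] assms(4)] by blast
  then have "y $ \<tau> i = y $ i" if "\<psi> \<in> css_codespace HA HB" and "\<psi> y \<noteq> 0" for \<psi> y i
    using css_codespace_support_coordinates_eq[OF assms(2)] that by blast
  then show ?thesis
    unfolding logical_identity_def
    using qudit_perm_op_eq_self[OF perm] by blast
qed

end
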